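(* Let $\mathcal M=(M,<,+,0,\ldots)$ be a definably complete locally o-minimal expansion of an ordered group. Every definable metric space has the definable curve selection property.
   Context: "Definable" means definable in $\mathcal M$ with parameters. $\mathcal M$ is an expansion of an ordered group with dense order without endpoints; locally o-minimal: for every definable $Y\subseteq M$ and $a\in M$ there is an open interval $I\ni a$ with $Y\cap I$ a finite union of points and open intervals; definably complete: every definable subset of $M$ has sup and inf in $M\cup\{\pm\infty\}$. A definable metric space $(X,d_X)$ is a definable set with a definable $d_X:X\times X\to\{a\ge 0\}$ satisfying $d_X(x,y)=0\iff x=y$, symmetry and triangle inequality, with the topology generated by the balls $\{y:d_X(x,y)<\varepsilon\}$. A definable curve is a definable, not necessarily continuous, map from an open interval. For $\gamma:(a,b)\to X$, $\operatorname{Conv}_{\mathrm{left}}(\gamma)$ is the set of $x\in X$ such that for every $t\in(a,b)$ and every definable neighborhood $A$ of $x$, $\gamma((a,t))\cap A\ne\emptyset$. A definable topological space $(X,\tau)$ has the definable curve selection property if for every definable $C\subseteq X$ and every $x$ in the frontier $\partial_\tau C$, there is a definable curve $\gamma:(a,b)\to C$ with $a\in M$ and $x\in\operatorname{Conv}_{\mathrm{left}}(\gamma)$. *)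

theory Defs
  imports Main
begin

(* The underlying set M is the carrier type 'a.
   A "structure" on M (in the sense of van den Dries) is a family D n of subsets of M^n;
   D n is exactly the family of subsets of M^n definable with parameters in some expansion
   of (M,<,+,0).  Conversely, every family satisfying the axioms below is the family of
   definable sets of the expansion naming all of its members.  Hence quantifying over all
   such families D is quantifying over all expansions M. *)

definition Mpow :: "nat \<Rightarrow> 'a list set" where
  "Mpow n = {xs. length xs = n}"

definition is_structure :: "(nat \<Rightarrow> 'a list set set) \<Rightarrow> bool" where
  "is_structure D \<longleftrightarrow>
     (\<forall>n A. A \<in> D n \<longrightarrow> A \<subseteq> Mpow n) \<and>
     (\<forall>n. Mpow n \<in> D n) \<and>
     (\<forall>n A B. A \<in> D n \<longrightarrow> B \<in> D n \<longrightarrow> A - B \<in> D n) \<and>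
     (\<forall>n A B. A \<in> D n \<longrightarrow> B \<in> D n \<longrightarrow> A \<union> B \<in> D n) \<and>
     (\<forall>n A. A \<in> D n \<longrightarrow> {xs @ [y] | xs y. xs \<in> A} \<in> D (Suc n)) \<and>
     (\<forall>n A. A \<in> D n \<longrightarrow> {y # xs | xs y. xs \<in> A} \<in> D (Suc n)) \<and>
     (\<forall>n A. A \<in> D (Suc n) \<longrightarrow> butlast ` A \<in> D n) \<and>
     (\<forall>n i j. i < n \<longrightarrow> j < n \<longrightarrow> {xs \<in> Mpow n. xs ! i = xs ! j} \<in> D n)"

definition expands_ordered_group :: "(nat \<Rightarrow> ('a::{linorder,group_add}) list set set) \<Rightarrow> bool" where
  "expands_ordered_group D \<longleftrightarrow>
     is_structure D \<and>
     (\<forall>c. {[c]} \<in> D 1) \<and>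
     {[x, y] | x y. x < y} \<in> D 2 \<and>
     {[x, y, z] | x y z. z = x + y} \<in> D 3"

definition dense_ordered_group :: "'a::{linorder,group_add} itself \<Rightarrow> bool" where
  "dense_ordered_group _ \<longleftrightarrow>
     (\<forall>x y z :: 'a. x < y \<longrightarrow> z + x < z + y \<and> x + z < y + z) \<and>
     (\<forall>x y :: 'a. x < y \<longrightarrow> (\<exists>z. x < z \<and> z < y)) \<and>
     (\<forall>x :: 'a. (\<exists>y. y < x) \<and> (\<exists>y. x < y))"

(* open interval with endpoints in M \<union> {-\<infinity>, +\<infinity>}; None stands for -\<infinity> (lower) / +\<infinity> (upper) *)
definition oint :: "'a::linorder option \<Rightarrow> 'a option \<Rightarrow> 'a set" where
  "oint l u = {t. (case l of None \<Rightarrow> True | Some c \<Rightarrow> c < t) \<and>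
                  (case u of None \<Rightarrow> True | Some d \<Rightarrow> t < d)}"

definition dset1 :: "(nat \<Rightarrow> 'a list set set) \<Rightarrow> 'a set \<Rightarrow> bool" where
  "dset1 D Y \<longleftrightarrow> (\<lambda>y. [y]) ` Y \<in> D 1"

definition locally_o_minimal :: "(nat \<Rightarrow> ('a::linorder) list set set) \<Rightarrow> bool" where
  "locally_o_minimal D \<longleftrightarrow>
     (\<forall>Y a. dset1 D Y \<longrightarrow>
        (\<exists>l u. a \<in> oint l u \<and>
           (\<exists>P Q. finite P \<and> finite Q \<and>
               Y \<inter> oint l u = P \<union> (\<Union>(l', u') \<in> Q. oint l' u'))))"

(* every definable subset of M has a supremum and an infimum in M \<union> {\<plusminus>\<infinity>};
   sup Y = -\<infinity> iff Y is empty, sup Y = +\<infinity> iff Y is unbounded above,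
   so this amounts to: nonempty definable sets bounded above (below) have a least upper
   (greatest lower) bound in M *)
definition definably_complete :: "(nat \<Rightarrow> ('a::linorder) list set set) \<Rightarrow> bool" where
  "definably_complete D \<longleftrightarrow>
     (\<forall>Y. dset1 D Y \<longrightarrow> Y \<noteq> {} \<longrightarrow> (\<exists>b. \<forall>y\<in>Y. y \<le> b) \<longrightarrow>
          (\<exists>s. (\<forall>y\<in>Y. y \<le> s) \<and> (\<forall>b. (\<forall>y\<in>Y. y \<le> b) \<longrightarrow> s \<le> b))) \<and>
     (\<forall>Y. dset1 D Y \<longrightarrow> Y \<noteq> {} \<longrightarrow> (\<exists>b. \<forall>y\<in>Y. b \<le> y) \<longrightarrow>
          (\<exists>s. (\<forall>y\<in>Y. s \<le> y) \<and> (\<forall>b. (\<forall>y\<in>Y. b \<le> y) \<longrightarrow> b \<le> s)))"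

definition definable_metric_space ::
  "(nat \<Rightarrow> ('a::{linorder,group_add}) list set set) \<Rightarrow> nat \<Rightarrow> 'a list set
     \<Rightarrow> ('a list \<Rightarrow> 'a list \<Rightarrow> 'a) \<Rightarrow> bool" where
  "definable_metric_space D n X dX \<longleftrightarrow>
     X \<in> D n \<and>
     {xs @ ys @ [dX xs ys] | xs ys. xs \<in> X \<and> ys \<in> X} \<in> D (n + n + 1) \<and>
     (\<forall>x\<in>X. \<forall>y\<in>X. 0 \<le> dX x y) \<and>
     (\<forall>x\<in>X. \<forall>y\<in>X. dX x y = 0 \<longleftrightarrow> x = y) \<and>
     (\<forall>x\<in>X. \<forall>y\<in>X. dX x y = dX y x) \<and>
     (\<forall>x\<in>X. \<forall>y\<in>X. \<forall>z\<in>X. dX x z \<le> dX x y + dX y z)"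

definition mball :: "('a::ord) list set \<Rightarrow> ('a list \<Rightarrow> 'a list \<Rightarrow> 'a) \<Rightarrow> 'a list \<Rightarrow> 'a \<Rightarrow> 'a list set" where
  "mball X dX x e = {y \<in> X. dX x y < e}"

definition mclosure :: "'a list set \<Rightarrow> ('a list \<Rightarrow> 'a list \<Rightarrow> ('a::{linorder,zero})) \<Rightarrow> 'a list set \<Rightarrow> 'a list set" where
  "mclosure X dX C = {x \<in> X. \<forall>e. 0 < e \<longrightarrow> mball X dX x e \<inter> C \<noteq> {}}"

definition mfrontier :: "'a list set \<Rightarrow> ('a list \<Rightarrow> 'a list \<Rightarrow> ('a::{linorder,zero})) \<Rightarrow> 'a list set \<Rightarrow> 'a list set" where
  "mfrontier X dX C = mclosure X dX C - C"

definition def_nbhd :: "(nat \<Rightarrow> ('a::{linorder,zero}) list set set) \<Rightarrow> nat \<Rightarrow> 'a list set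
     \<Rightarrow> ('a list \<Rightarrow> 'a list \<Rightarrow> 'a) \<Rightarrow> 'a list set \<Rightarrow> 'a list \<Rightarrow> bool" where
  "def_nbhd D n X dX A x \<longleftrightarrow> A \<in> D n \<and> A \<subseteq> X \<and> x \<in> A \<and> (\<exists>e. 0 < e \<and> mball X dX x e \<subseteq> A)"

definition conv_left :: "(nat \<Rightarrow> ('a::{linorder,zero}) list set set) \<Rightarrow> nat \<Rightarrow> 'a list set
     \<Rightarrow> ('a list \<Rightarrow> 'a list \<Rightarrow> 'a) \<Rightarrow> 'a \<Rightarrow> 'a option \<Rightarrow> ('a \<Rightarrow> 'a list) \<Rightarrow> 'a list set" where
  "conv_left D n X dX a b \<gamma> =
     {x \<in> X. \<forall>t \<in> oint (Some a) b. \<forall>A. def_nbhd D n X dX A x \<longrightarrow>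
               \<gamma> ` oint (Some a) (Some t) \<inter> A \<noteq> {}}"

definition definable_curve :: "(nat \<Rightarrow> ('a::linorder) list set set) \<Rightarrow> nat \<Rightarrow> 'a list set
     \<Rightarrow> 'a \<Rightarrow> 'a option \<Rightarrow> ('a \<Rightarrow> 'a list) \<Rightarrow> bool" where
  "definable_curve D n C a b \<gamma> \<longleftrightarrow>
     oint (Some a) b \<noteq> {} \<and>
     (\<forall>t \<in> oint (Some a) b. \<gamma> t \<in> C) \<and>
     {t # \<gamma> t | t. t \<in> oint (Some a) b} \<in> D (Suc n)"

definition definable_curve_selection ::
  "(nat \<Rightarrow> ('a::{linorder,zero}) list set set) \<Rightarrow> nat \<Rightarrow> 'a list set \<Rightarrow> ('a list \<Rightarrow> 'a list \<Rightarrow> 'a) \<Rightarrow> bool" where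
  "definable_curve_selection D n X dX \<longleftrightarrow>
     (\<forall>C x. C \<in> D n \<longrightarrow> C \<subseteq> X \<longrightarrow> x \<in> mfrontier X dX C \<longrightarrow>
        (\<exists>a b \<gamma>. definable_curve D n C a b \<gamma> \<and> x \<in> conv_left D n X dX a b \<gamma>))"

end

theory Submission
  imports Defs
begin

text \<open>Let \<open>x\<close> lie in the frontier of a definable \<open>C\<close>. The distances \<open>d(x, y)\<close>,
  \<open>y \<in> C\<close>, form a definable subset of \<open>M\<close> that accumulates at \<open>0\<close> without
  containing it, so by local o-minimality it contains an interval \<open>(0, \<epsilon>)\<close>. Definable
  choice then yields a definable \<open>\<gamma>\<close> on \<open>(0, \<epsilon>)\<close> with \<open>\<gamma> t \<in> C\<close> and
  \<open>d(x, \<gamma> t) = t\<close>, a curve that converges to \<open>x\<close> as \<open>t \<rightarrow> 0\<close>.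

  Definable choice is built one coordinate at a time from a choice of a point in a nonempty
  definable \<open>Y \<subseteq> M\<close> that is given by a single formula, hence uniform in parameters:
  the infimum of \<open>Y\<close> (made bounded below by passing to \<open>Y \<inter> [0, \<infinity>)\<close> or \<open>-Y\<close>) if it is
  attained, and otherwise a point of the interval that \<open>Y\<close> contains just above it. Local
  o-minimality provides that interval, definable completeness the suprema that locate a point
  inside it.\<close>

lemma Mpow_iff [simp]: "xs \<in> Mpow n \<longleftrightarrow> length xs = n"
  by (simp add: Mpow_def)

definition prepend :: "'b list \<Rightarrow> (nat \<Rightarrow> 'b) \<Rightarrow> nat \<Rightarrow> 'b" where
  "prepend xs v i = (if i < length xs then xs ! i else v (i - length xs))"

lemma prepend_Cons: "prepend (a # xs) v = case_nat a (prepend xs v)"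
  by (auto simp: prepend_def fun_eq_iff split: nat.split)

lemma map_prepend_upt: "length xs = n \<Longrightarrow> map (prepend xs v) [0..<n] = xs"
  by (rule nth_equalityI) (simp_all add: prepend_def)

lemma butlast_image_iff_snoc:
  assumes "[] \<notin> F"
  shows "r \<in> butlast ` F \<longleftrightarrow> (\<exists>y. r @ [y] \<in> F)"
proof
  assume "r \<in> butlast ` F"
  then obtain a where a: "r = butlast a" "a \<in> F"
    by (rule imageE)
  then have "butlast a @ [last a] \<in> F"
    using assms by (metis append_butlast_last_id)
  then show "\<exists>y. r @ [y] \<in> F"
    unfolding a(1) by (rule exI[of _ "last a"])
next
  assume "\<exists>y. r @ [y] \<in> F"
  then obtain y where "r @ [y] \<in> F" ..
  then show "r \<in> butlast ` F"
    by (intro image_eqI[of _ _ "r @ [y]"]) simp_all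
qed

lemma prefix_in_butlast_image_iff:
  assumes "\<forall>a\<in>F. length q < length a"
  shows "(\<exists>zs. q @ zs \<in> butlast ` F) \<longleftrightarrow> (\<exists>zs. q @ zs \<in> F)"
proof
  assume "\<exists>zs. q @ zs \<in> butlast ` F"
  then obtain zs where "q @ zs \<in> butlast ` F" ..
  moreover have "[] \<notin> F"
    using assms by auto
  ultimately obtain y where "(q @ zs) @ [y] \<in> F"
    using butlast_image_iff_snoc by blast
  then show "\<exists>zs. q @ zs \<in> F"
    by (metis append.assoc)
next
  assume "\<exists>zs. q @ zs \<in> F"
  then obtain zs where zs: "q @ zs \<in> F" ..
  then have "zs \<noteq> []"
    using bspec[OF assms zs] by auto
  then obtain zs' y where "zs = zs' @ [y]"
    by (metis rev_exhaust)
  then have "(q @ zs') @ [y] \<in> F"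
    using zs by simp
  then have "q @ zs' \<in> butlast ` F"
    by (intro image_eqI[of _ _ "(q @ zs') @ [y]"]) (simp_all add: butlast_append)
  then show "\<exists>zs. q @ zs \<in> butlast ` F" ..
qed

section \<open>Closure properties of a structure\<close>

locale definable_structure =
  fixes D :: "nat \<Rightarrow> 'a list set set"
  assumes is_structure: "is_structure D"
begin

lemma in_D_subset_Mpow: "A \<in> D n \<Longrightarrow> A \<subseteq> Mpow n"
  using is_structure by (simp add: is_structure_def)

lemma in_D_length: "A \<in> D n \<Longrightarrow> xs \<in> A \<Longrightarrow> length xs = n"
  using in_D_subset_Mpow by fastforce

lemma Mpow_in_D: "Mpow n \<in> D n"
  using is_structure by (simp add: is_structure_def)

lemma Diff_in_D: "A \<in> D n \<Longrightarrow> B \<in> D n \<Longrightarrow> A - B \<in> D n"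
  using is_structure by (simp add: is_structure_def)

lemma Int_in_D: "A \<in> D n \<Longrightarrow> B \<in> D n \<Longrightarrow> A \<inter> B \<in> D n"
  using Diff_in_D[of A n "A - B"] Diff_in_D[of A n B] by (simp add: Diff_Diff_Int)

lemma snoc_in_D: "A \<in> D n \<Longrightarrow> {xs @ [y] | xs y. xs \<in> A} \<in> D (Suc n)"
  using is_structure by (simp add: is_structure_def)

lemma Cons_in_D: "A \<in> D n \<Longrightarrow> {y # xs | xs y. xs \<in> A} \<in> D (Suc n)"
  using is_structure by (simp add: is_structure_def)

lemma butlast_image_in_D: "A \<in> D (Suc n) \<Longrightarrow> butlast ` A \<in> D n"
  using is_structure by (simp add: is_structure_def)

lemma diagonal_in_D: "i < n \<Longrightarrow> j < n \<Longrightarrow> {xs. length xs = n \<and> xs ! i = xs ! j} \<in> D n"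
  using is_structure by (simp add: is_structure_def)

lemma left_cylinder_in_D: "A \<in> D k \<Longrightarrow> {ys @ xs | ys xs. length ys = m \<and> xs \<in> A} \<in> D (m + k)"
proof (induction m)
  case 0
  then show ?case by simp
next
  case (Suc m)
  have "{ys @ xs | ys xs. length ys = Suc m \<and> xs \<in> A}
      = {y # zs | zs y. zs \<in> {ys @ xs | ys xs. length ys = m \<and> xs \<in> A}}"
  proof (intro set_eqI iffI)
    fix w assume "w \<in> {ys @ xs | ys xs. length ys = Suc m \<and> xs \<in> A}"
    then obtain y ys xs where "w = y # ys @ xs" "length ys = m" "xs \<in> A"
      by (auto simp: length_Suc_conv)
    then show "w \<in> {y # zs | zs y. zs \<in> {ys @ xs | ys xs. length ys = m \<and> xs \<in> A}}"
      by blast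
  next
    fix w assume "w \<in> {y # zs | zs y. zs \<in> {ys @ xs | ys xs. length ys = m \<and> xs \<in> A}}"
    then obtain y ys xs where "w = (y # ys) @ xs" "length (y # ys) = Suc m" "xs \<in> A"
      by auto
    then show "w \<in> {ys @ xs | ys xs. length ys = Suc m \<and> xs \<in> A}"
      by blast
  qed
  then show ?case using Cons_in_D[OF Suc.IH[OF Suc.prems]] by simp
qed

lemma take_image_in_D: "A \<in> D (m + k) \<Longrightarrow> take m ` A \<in> D m"
proof (induction k arbitrary: A)
  case 0
  then have "take m ` A = A" using in_D_length by force
  then show ?case using 0 by simp
next
  case (Suc k)
  have "take m ` butlast ` A \<in> D m"
    using Suc.IH butlast_image_in_D Suc.prems by simp
  moreover have "take m ` butlast ` A = take m ` A"
    using in_D_length[OF Suc.prems] by (auto simp: image_image butlast_conv_take intro!: image_cong)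
  ultimately show ?case by simp
qed

lemma diagonals_in_D:
  "\<forall>(i, j) \<in> set ps. i < N \<and> j < N \<Longrightarrow>
     {zs. length zs = N \<and> (\<forall>(i, j) \<in> set ps. zs ! i = zs ! j)} \<in> D N"
proof (induction ps)
  case Nil
  then show ?case using Mpow_in_D by (simp add: Mpow_def)
next
  case (Cons p ps)
  obtain i j where p: "p = (i, j)" by force
  have "{zs. length zs = N \<and> (\<forall>(i, j) \<in> set (p # ps). zs ! i = zs ! j)}
      = {zs. length zs = N \<and> (\<forall>(i, j) \<in> set ps. zs ! i = zs ! j)}
        \<inter> {zs. length zs = N \<and> zs ! i = zs ! j}"
    using p by auto
  also have "\<dots> \<in> D N"
    using Cons p by (intro Int_in_D diagonal_in_D) auto
  finally show ?case .
qed

lemma set_zip_upt: "set (zip [m..<m + length vs] vs) = (\<lambda>l. (m + l, vs ! l)) ` {..<length vs}"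
proof -
  have "zip [m..<m + length vs] vs = map (\<lambda>l. (m + l, vs ! l)) [0..<length vs]"
    by (rule nth_equalityI) simp_all
  then show ?thesis by (simp add: atLeast0LessThan)
qed

lemma zip_diagonals_iff_map_nth:
  assumes "length ys = m" and "length zs = length vs" and "\<forall>i \<in> set vs. i < m"
  shows "(\<forall>(i, j) \<in> set (zip [m..<m + length vs] vs). (ys @ zs) ! i = (ys @ zs) ! j)
    \<longleftrightarrow> zs = map (nth ys) vs"
proof -
  have "(ys @ zs) ! (vs ! l) = ys ! (vs ! l)" if "l < length vs" for l
    using assms that by (simp add: nth_append)
  then have "(\<forall>(i, j) \<in> set (zip [m..<m + length vs] vs). (ys @ zs) ! i = (ys @ zs) ! j)
      \<longleftrightarrow> (\<forall>l \<in> {..<length vs}. zs ! l = ys ! (vs ! l))"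
    using assms(1) by (simp add: set_zip_upt nth_append)
  also have "\<dots> \<longleftrightarrow> zs = map (nth ys) vs"
    using assms(2) by (auto simp: list_eq_iff_nth_eq)
  finally show ?thesis .
qed

lemma reindex_in_D:
  assumes A: "A \<in> D (length vs)" and vs: "\<forall>i \<in> set vs. i < m"
  shows "{xs. length xs = m \<and> map (nth xs) vs \<in> A} \<in> D m"
proof -
  let ?ps = "zip [m..<m + length vs] vs"
  let ?B = "{ys @ zs | ys zs. length ys = m \<and> zs \<in> A}
    \<inter> {zs. length zs = m + length vs \<and> (\<forall>(i, j) \<in> set ?ps. zs ! i = zs ! j)}"
  have "?B \<in> D (m + length vs)"
    using vs by (intro Int_in_D left_cylinder_in_D A diagonals_in_D)
      (auto simp: set_zip_upt intro: trans_less_add1)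
  then have "take m ` ?B \<in> D m"
    by (rule take_image_in_D)
  moreover have "?B = (\<lambda>ys. ys @ map (nth ys) vs) ` {xs. length xs = m \<and> map (nth xs) vs \<in> A}"
  proof (intro set_eqI iffI)
    fix w assume "w \<in> ?B"
    then obtain ys zs where w: "w = ys @ zs" "length ys = m" "zs \<in> A"
      and diag: "\<forall>(i, j) \<in> set ?ps. (ys @ zs) ! i = (ys @ zs) ! j"
      by blast
    then have "zs = map (nth ys) vs"
      using zip_diagonals_iff_map_nth[OF w(2) in_D_length[OF A w(3)] vs] by blast
    then show "w \<in> (\<lambda>ys. ys @ map (nth ys) vs) ` {xs. length xs = m \<and> map (nth xs) vs \<in> A}"
      using w by blast
  next
    fix w assume "w \<in> (\<lambda>ys. ys @ map (nth ys) vs) ` {xs. length xs = m \<and> map (nth xs) vs \<in> A}"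
    then obtain ys where w: "w = ys @ map (nth ys) vs" "length ys = m" "map (nth ys) vs \<in> A"
      by blast
    then have "\<forall>(i, j) \<in> set ?ps. (ys @ map (nth ys) vs) ! i = (ys @ map (nth ys) vs) ! j"
      using zip_diagonals_iff_map_nth[OF w(2) _ vs, of "map (nth ys) vs"] by simp
    then show "w \<in> ?B"
      using w by auto
  qed
  ultimately show ?thesis
    by (simp add: image_image)
qed

lemma exists_Cons_in_D:
  assumes "{zs. length zs = Suc n \<and> P zs} \<in> D (Suc n)"
  shows "{xs. length xs = n \<and> (\<exists>a. P (a # xs))} \<in> D n"
proof -
  let ?R = "{zs. length zs = Suc n \<and> map (nth zs) (n # [0..<n]) \<in> {zs. length zs = Suc n \<and> P zs}}"
  have "?R \<in> D (Suc n)"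
    using assms by (intro reindex_in_D) auto
  then have "butlast ` ?R \<in> D n"
    by (rule butlast_image_in_D)
  have rotate: "map (nth (xs @ [a])) (n # [0..<n]) = a # xs" if "length xs = n" for xs a
    using that by (auto simp: nth_append intro!: nth_equalityI)
  have "?R = {xs @ [a] | xs a. length xs = n \<and> P (a # xs)}"
  proof (intro set_eqI iffI)
    fix zs assume "zs \<in> ?R"
    then obtain xs a where zs: "zs = xs @ [a]" "length xs = n"
      by (auto simp: length_Suc_conv_rev)
    then have "map (nth zs) (n # [0..<n]) = a # xs"
      using rotate[of xs a] by simp
    then show "zs \<in> {xs @ [a] | xs a. length xs = n \<and> P (a # xs)}"
      using \<open>zs \<in> ?R\<close> zs by auto
  next
    fix zs assume "zs \<in> {xs @ [a] | xs a. length xs = n \<and> P (a # xs)}"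
    then obtain xs a where zs: "zs = xs @ [a]" "length xs = n" "P (a # xs)"
      by blast
    then have "map (nth zs) (n # [0..<n]) = a # xs"
      using rotate[of xs a] by simp
    then show "zs \<in> ?R"
      unfolding mem_Collect_eq using zs by simp
  qed
  moreover have "butlast ` {xs @ [a] | xs a. length xs = n \<and> P (a # xs)}
      = {xs. length xs = n \<and> (\<exists>a. P (a # xs))}"
  proof (intro set_eqI iffI)
    fix xs assume "xs \<in> {xs. length xs = n \<and> (\<exists>a. P (a # xs))}"
    then obtain a where "length xs = n" "P (a # xs)"
      by blast
    then show "xs \<in> butlast ` {xs @ [a] | xs a. length xs = n \<and> P (a # xs)}"
      by (intro image_eqI[of _ _ "xs @ [a]"]) auto
  qed auto
  ultimately show ?thesis
    using \<open>butlast ` ?R \<in> D n\<close> by simp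
qed

end

locale ordered_group_expansion =
  fixes D :: "nat \<Rightarrow> ('a::{linorder,group_add}) list set set"
  assumes expands_ordered_group: "expands_ordered_group D"

sublocale ordered_group_expansion \<subseteq> definable_structure
  using expands_ordered_group by unfold_locales (simp add: expands_ordered_group_def)

context ordered_group_expansion
begin

lemma constant_in_D: "{[c]} \<in> D (Suc 0)"
  using expands_ordered_group by (simp add: expands_ordered_group_def)

lemma less_in_D: "{[x, y] | x y. x < y} \<in> D (Suc (Suc 0))"
  using expands_ordered_group by (simp add: expands_ordered_group_def numeral_2_eq_2)

lemma plus_in_D: "{[x, y, z] | x y z. z = x + y} \<in> D (Suc (Suc (Suc 0)))"
  using expands_ordered_group by (simp add: expands_ordered_group_def numeral_3_eq_3)

lemma singleton_in_D: "{cs} \<in> D (length cs)"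
proof (induction cs)
  case Nil
  have "{[]} = Mpow 0" by (auto simp: Mpow_def)
  then show ?case using Mpow_in_D by (metis list.size(3))
next
  case (Cons c cs)
  have "{c # cs} = {y # xs | xs y. xs \<in> {cs}}
      \<inter> {xs. length xs = Suc (length cs) \<and> map (nth xs) [0] \<in> {[c]}}"
    by auto
  moreover have "{xs. length xs = Suc (length cs) \<and> map (nth xs) [0] \<in> {[c]}} \<in> D (Suc (length cs))"
    by (rule reindex_in_D) (simp_all add: constant_in_D)
  ultimately show ?case using Cons_in_D[OF Cons.IH] by (simp add: Int_in_D)
qed

section \<open>First-order definable predicates\<close>

text \<open>First-order formulas over the sets in \<open>D\<close>, represented semantically as
  predicates on valuations \<open>v :: nat \<Rightarrow> 'a\<close> of de Bruijn indexed variables;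
  the existential quantifier binds variable \<open>0\<close>.\<close>

inductive definable :: "((nat \<Rightarrow> 'a) \<Rightarrow> bool) \<Rightarrow> bool" where
  atom: "A \<in> D (length vs) \<Longrightarrow> definable (\<lambda>v. map v vs \<in> A)"
| Not: "definable P \<Longrightarrow> definable (\<lambda>v. \<not> P v)"
| conj: "definable P \<Longrightarrow> definable Q \<Longrightarrow> definable (\<lambda>v. P v \<and> Q v)"
| Ex: "definable P \<Longrightarrow> definable (\<lambda>v. \<exists>a. P (case_nat a v))"

text \<open>Variables beyond the first \<open>n\<close> are parameters; this is where the definability
  of singletons is needed.\<close>

lemma atom_set_in_D:
  assumes A: "A \<in> D (length vs)"
  shows "{xs. length xs = n \<and> map (prepend xs v) vs \<in> A} \<in> D n"
proof -
  define K where "K = Suc (sum_list vs)"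
  have vs: "\<forall>i \<in> set vs. i < n + K"
    unfolding K_def using member_le_sum_list by fastforce
  define cs where "cs = map v [0..<K]"
  let ?T = "{zs. length zs = n + K \<and> map (nth zs) vs \<in> A}"
  let ?U = "{ys @ xs | ys xs. length ys = n \<and> xs \<in> {cs}}"
  have "?T \<inter> ?U \<in> D (n + K)"
    using reindex_in_D[OF A vs] left_cylinder_in_D[OF singleton_in_D[of cs]]
    by (intro Int_in_D) (simp_all add: cs_def)
  then have "take n ` (?T \<inter> ?U) \<in> D n"
    by (rule take_image_in_D)
  moreover have key: "map (nth (ys @ cs)) vs = map (prepend ys v) vs" if "length ys = n" for ys
    using that vs by (auto simp: prepend_def nth_append cs_def)
  have "?T \<inter> ?U = (\<lambda>ys. ys @ cs) ` {xs. length xs = n \<and> map (prepend xs v) vs \<in> A}"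
  proof (intro set_eqI iffI)
    fix w assume "w \<in> ?T \<inter> ?U"
    then obtain ys where w: "w = ys @ cs" "length ys = n" "map (nth (ys @ cs)) vs \<in> A"
      by blast
    then show "w \<in> (\<lambda>ys. ys @ cs) ` {xs. length xs = n \<and> map (prepend xs v) vs \<in> A}"
      using key[OF w(2)] by (intro image_eqI[of _ _ ys]) auto
  next
    fix w assume "w \<in> (\<lambda>ys. ys @ cs) ` {xs. length xs = n \<and> map (prepend xs v) vs \<in> A}"
    then obtain ys where w: "w = ys @ cs" "length ys = n" "map (prepend ys v) vs \<in> A"
      by blast
    have "map (nth (ys @ cs)) vs \<in> A"
      unfolding key[OF w(2)] by (rule w(3))
    moreover have "length (ys @ cs) = n + K"
      using w(2) by (simp add: cs_def)
    ultimately show "w \<in> ?T \<inter> ?U"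
      using w(1,2) by blast
  qed
  ultimately show ?thesis
    by (simp add: image_image cong: image_cong_simp)
qed

lemma definable_set: "definable P \<Longrightarrow> {xs. length xs = n \<and> P (prepend xs v)} \<in> D n"
proof (induction arbitrary: n v rule: definable.induct)
  case (atom A vs)
  then show ?case by (rule atom_set_in_D)
next
  case (Not P)
  have "{xs. length xs = n \<and> \<not> P (prepend xs v)} = Mpow n - {xs. length xs = n \<and> P (prepend xs v)}"
    by auto
  then show ?case using Diff_in_D[OF Mpow_in_D Not.IH] by simp
next
  case (conj P Q)
  have "{xs. length xs = n \<and> P (prepend xs v) \<and> Q (prepend xs v)}
     = {xs. length xs = n \<and> P (prepend xs v)} \<inter> {xs. length xs = n \<and> Q (prepend xs v)}"
    by auto
  then show ?case using Int_in_D[OF conj.IH] by simp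
next
  case (Ex P)
  have "{xs. length xs = n \<and> (\<exists>a. P (prepend (a # xs) v))} \<in> D n"
    by (rule exists_Cons_in_D[OF Ex.IH])
  then show ?case by (simp add: prepend_Cons)
qed

lemma definable_cong: "definable P \<Longrightarrow> (\<And>v. P v \<longleftrightarrow> Q v) \<Longrightarrow> definable Q"
proof -
  assume "definable P" and PQ: "\<And>v. P v \<longleftrightarrow> Q v"
  have "P = Q" by (rule ext) (rule PQ)
  with \<open>definable P\<close> show ?thesis by simp
qed

lemma definable_subst: "definable P \<Longrightarrow> definable (\<lambda>v. P (\<lambda>i. v (f i)))"
proof (induction arbitrary: f rule: definable.induct)
  case (atom A vs)
  have "definable (\<lambda>v. map v (map f vs) \<in> A)"
    using atom by (intro definable.atom) simp
  then show ?case by (rule definable_cong) (simp add: comp_def)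
next
  case (Not P)
  show ?case using definable.Not[OF Not.IH] .
next
  case (conj P Q)
  show ?case using definable.conj[OF conj.IH] .
next
  case (Ex P)
  have "definable (\<lambda>w. P (\<lambda>i. w (case_nat 0 (\<lambda>j. Suc (f j)) i)))"
    by (rule Ex.IH)
  then have "definable (\<lambda>v. \<exists>a. P (\<lambda>i. case_nat a v (case_nat 0 (\<lambda>j. Suc (f j)) i)))"
    by (rule definable.Ex)
  then show ?case
  proof (rule definable_cong)
    fix v :: "nat \<Rightarrow> 'a"
    have "(\<lambda>i. case_nat a v (case_nat 0 (\<lambda>j. Suc (f j)) i)) = case_nat a (\<lambda>i. v (f i))" for a
      by (auto simp: fun_eq_iff split: nat.split)
    then show "(\<exists>a. P (\<lambda>i. case_nat a v (case_nat 0 (\<lambda>j. Suc (f j)) i)))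
        \<longleftrightarrow> (\<exists>a. P (case_nat a (\<lambda>i. v (f i))))"
      by simp
  qed
qed

lemma definable_True: "definable (\<lambda>v. True)"
proof -
  have "definable (\<lambda>v. map v [] \<in> Mpow 0)"
    using Mpow_in_D by (intro definable.atom) simp
  then show ?thesis by (rule definable_cong) simp
qed

lemma definable_const: "definable (\<lambda>v. b)"
proof (cases b)
  case True
  then show ?thesis using definable_True by simp
next
  case False
  then show ?thesis using definable.Not[OF definable_True] by simp
qed

lemma definable_disj:
  assumes "definable P" "definable Q"
  shows "definable (\<lambda>v. P v \<or> Q v)"
  using definable.Not[OF definable.conj[OF definable.Not[OF assms(1)] definable.Not[OF assms(2)]]]
  by (rule definable_cong) simp

lemma definable_imp:
  assumes "definable P" "definable Q"
  shows "definable (\<lambda>v. P v \<longrightarrow> Q v)"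
  using definable_disj[OF definable.Not[OF assms(1)] assms(2)] by (rule definable_cong) simp

lemma definable_ex:
  assumes "definable (\<lambda>v. Q (v 0) (\<lambda>i. v (Suc i)))"
  shows "definable (\<lambda>v. \<exists>a. Q a v)"
  using definable.Ex[OF assms] by (rule definable_cong) simp

lemma definable_all:
  assumes "definable (\<lambda>v. Q (v 0) (\<lambda>i. v (Suc i)))"
  shows "definable (\<lambda>v. \<forall>a. Q a v)"
proof -
  have "definable (\<lambda>v. \<exists>a. \<not> Q a v)"
    using definable.Not[OF assms] by (rule definable_ex)
  from definable.Not[OF this] show ?thesis
    by (rule definable_cong) simp
qed

lemma definable_var_eq: "definable (\<lambda>v. v i = v j)"
proof -
  have "definable (\<lambda>v. map v [i, j] \<in> {xs. length xs = Suc (Suc 0) \<and> xs ! 0 = xs ! 1})"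
    using diagonal_in_D[of 0 "Suc (Suc 0)" 1] by (intro definable.atom) simp
  then show ?thesis by (rule definable_cong) simp
qed

lemma definable_var_less: "definable (\<lambda>v. v i < v j)"
proof -
  have "definable (\<lambda>v. map v [i, j] \<in> {[x, y] | x y. x < y})"
    using less_in_D by (intro definable.atom) simp
  then show ?thesis by (rule definable_cong) simp
qed

lemma definable_var_plus: "definable (\<lambda>v. v k = v i + v j)"
proof -
  have "definable (\<lambda>v. map v [i, j, k] \<in> {[x, y, z] | x y z. z = x + y})"
    using plus_in_D by (intro definable.atom) simp
  then show ?thesis by (rule definable_cong) simp
qed

lemma definable_var_eq_const: "definable (\<lambda>v. v i = c)"
proof -
  have "definable (\<lambda>v. map v [i] \<in> {[c]})"
    using constant_in_D by (intro definable.atom) simp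
  then show ?thesis by (rule definable_cong) simp
qed

definition definable_term :: "((nat \<Rightarrow> 'a) \<Rightarrow> 'a) \<Rightarrow> bool" where
  "definable_term t \<longleftrightarrow> definable (\<lambda>v. v 0 = t (\<lambda>i. v (Suc i)))"

lemma definable_term_eq: "definable_term t \<Longrightarrow> definable (\<lambda>v. v i = t (\<lambda>j. v (f j)))"
  unfolding definable_term_def
  by (drule definable_subst[where f = "case_nat i f"]) simp

lemma definable_term_var: "definable_term (\<lambda>v. v i)"
  unfolding definable_term_def by (rule definable_var_eq)

lemma definable_term_const: "definable_term (\<lambda>v. c)"
  unfolding definable_term_def by (rule definable_var_eq_const)

lemma definable_term_plus:
  assumes "definable_term t" "definable_term s"
  shows "definable_term (\<lambda>v. t v + s v)"
proof -
  have "definable (\<lambda>v. \<exists>a. a = t (\<lambda>i. v (Suc i)) \<and> (\<exists>b. b = s (\<lambda>i. v (Suc i)) \<and> v 0 = a + b))"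
    by (intro definable_ex definable.conj definable_term_eq[OF assms(1)]
        definable_term_eq[OF assms(2)] definable_var_plus)
  then show ?thesis
    unfolding definable_term_def by (rule definable_cong) blast
qed

lemma definable_term_uminus:
  assumes "definable_term t"
  shows "definable_term (\<lambda>v. - t v)"
proof -
  have "definable (\<lambda>v. \<exists>a. a = t (\<lambda>i. v (Suc i)) \<and> (\<exists>z. z = 0 \<and> z = v 0 + a))"
    by (intro definable_ex definable.conj definable_term_eq[OF assms] definable_var_eq_const
        definable_var_plus)
  then show ?thesis
    unfolding definable_term_def by (rule definable_cong) (metis eq_neg_iff_add_eq_0)
qed

lemma definable_less:
  assumes "definable_term t" "definable_term s"
  shows "definable (\<lambda>v. t v < s v)"
proof -
  have "definable (\<lambda>v. \<exists>a. a = t v \<and> (\<exists>b. b = s v \<and> a < b))"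
    by (intro definable_ex definable.conj definable_term_eq[OF assms(1)]
        definable_term_eq[OF assms(2)] definable_var_less)
  then show ?thesis by (rule definable_cong) blast
qed

lemma definable_le: "definable_term t \<Longrightarrow> definable_term s \<Longrightarrow> definable (\<lambda>v. t v \<le> s v)"
  by (drule (1) definable_less[THEN definable.Not, rotated]) (simp add: not_less)

lemma definable_eq:
  assumes "definable_term t" "definable_term s"
  shows "definable (\<lambda>v. t v = s v)"
proof -
  have "definable (\<lambda>v. \<exists>a. a = t v \<and> (\<exists>b. b = s v \<and> a = b))"
    by (intro definable_ex definable.conj definable_term_eq[OF assms(1)]
        definable_term_eq[OF assms(2)] definable_var_eq)
  then show ?thesis by (rule definable_cong) blast
qed

text \<open>A tuple-valued term of fixed length \<open>k\<close>; its defining formula puts the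
  value into the variables \<open>0, \<dots>, k - 1\<close> and shifts the arguments past them.\<close>

definition definable_tuple :: "((nat \<Rightarrow> 'a) \<Rightarrow> 'a list) \<Rightarrow> bool" where
  "definable_tuple L \<longleftrightarrow>
     (\<exists>k. (\<forall>v. length (L v) = k) \<and> definable (\<lambda>v. map v [0..<k] = L (\<lambda>i. v (i + k))))"

lemma definable_ex_tuple:
  "definable (\<lambda>v. Q (map v [0..<k]) (\<lambda>i. v (i + k))) \<Longrightarrow>
     definable (\<lambda>v. \<exists>ys. length ys = k \<and> Q ys v)"
proof (induction k arbitrary: Q)
  case 0
  then show ?case by (rule definable_cong) simp
next
  case (Suc k)
  have "definable (\<lambda>w. Q (w 0 # map (\<lambda>i. w (Suc i)) [0..<k]) (\<lambda>i. w (Suc (i + k))))"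
    using Suc.prems by (rule definable_cong) (simp add: map_upt_Suc del: upt_Suc)
  then have "definable (\<lambda>v. \<exists>a. Q (a # map v [0..<k]) (\<lambda>i. v (i + k)))"
    by (rule definable_ex)
  then have "definable (\<lambda>v. \<exists>ys. length ys = k \<and> (\<exists>a. Q (a # ys) v))"
    by (rule Suc.IH[where Q = "\<lambda>ys v. \<exists>a. Q (a # ys) v"])
  then show ?case
    by (rule definable_cong) (metis length_Suc_conv)
qed

lemma definable_mem:
  assumes L: "definable_tuple L" and A: "A \<in> D m"
  shows "definable (\<lambda>v. L v \<in> A)"
proof -
  obtain k where len: "\<And>v. length (L v) = k"
    and def: "definable (\<lambda>v. map v [0..<k] = L (\<lambda>i. v (i + k)))"
    using L unfolding definable_tuple_def by blast
  show ?thesis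
  proof (cases "k = m")
    case False
    then have "L v \<notin> A" for v
      using in_D_length[OF A] len by metis
    then show ?thesis
      using definable_const[of False] by (rule_tac definable_cong) auto
  next
    case True
    have "definable (\<lambda>v. map v [0..<k] = L (\<lambda>i. v (i + k)) \<and> map v [0..<k] \<in> A)"
      using A True by (intro definable.conj def definable.atom) simp
    then have "definable (\<lambda>v. \<exists>ys. length ys = k \<and> ys = L v \<and> ys \<in> A)"
      by (rule definable_ex_tuple[where Q = "\<lambda>ys v. ys = L v \<and> ys \<in> A"])
    then show ?thesis
      by (rule definable_cong) (metis len)
  qed
qed

lemma definable_tuple_Nil: "definable_tuple (\<lambda>v. [])"
  unfolding definable_tuple_def by (auto intro: definable_True)

lemma definable_tuple_Cons:
  assumes t: "definable_term t" and L: "definable_tuple L"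
  shows "definable_tuple (\<lambda>v. t v # L v)"
proof -
  obtain k where len: "\<And>v. length (L v) = k"
    and def: "definable (\<lambda>v. map v [0..<k] = L (\<lambda>i. v (i + k)))"
    using L unfolding definable_tuple_def by blast
  have "definable (\<lambda>v. v 0 = t (\<lambda>i. v (i + Suc k))
      \<and> map (\<lambda>i. v (Suc i)) [0..<k] = L (\<lambda>i. v (Suc (i + k))))"
    using definable_subst[OF def, of Suc] by (intro definable.conj definable_term_eq[OF t]) simp
  then have "definable (\<lambda>v. map v [0..<Suc k] = t (\<lambda>i. v (i + Suc k)) # L (\<lambda>i. v (i + Suc k)))"
    by (rule definable_cong) (simp add: map_upt_Suc del: upt_Suc)
  then show ?thesis
    unfolding definable_tuple_def using len by (intro exI[of _ "Suc k"]) simp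
qed

lemma definable_tuple_append:
  assumes L: "definable_tuple L" and M: "definable_tuple M"
  shows "definable_tuple (\<lambda>v. L v @ M v)"
proof -
  obtain k where lenL: "\<And>v. length (L v) = k"
    and defL: "definable (\<lambda>v. map v [0..<k] = L (\<lambda>i. v (i + k)))"
    using L unfolding definable_tuple_def by blast
  obtain l where lenM: "\<And>v. length (M v) = l"
    and defM: "definable (\<lambda>v. map v [0..<l] = M (\<lambda>i. v (i + l)))"
    using M unfolding definable_tuple_def by blast
  have "definable (\<lambda>v. map v [0..<k] = L (\<lambda>i. v (i + (k + l))))"
    using definable_subst[OF defL, of "\<lambda>i. if i < k then i else i + l"]
  proof (rule definable_cong)
    fix v :: "nat \<Rightarrow> 'a"
    have "map (\<lambda>i. v (if i < k then i else i + l)) [0..<k] = map v [0..<k]"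
      by simp
    moreover have "(\<lambda>i. v (if i + k < k then i + k else i + k + l)) = (\<lambda>i. v (i + (k + l)))"
      by (simp add: add.assoc)
    ultimately show "map (\<lambda>i. v (if i < k then i else i + l)) [0..<k]
        = L (\<lambda>i. v (if i + k < k then i + k else i + k + l))
      \<longleftrightarrow> map v [0..<k] = L (\<lambda>i. v (i + (k + l)))"
      by (simp only:)
  qed
  moreover have "definable (\<lambda>v. map v [k..<k + l] = M (\<lambda>i. v (i + (k + l))))"
    using definable_subst[OF defM, of "\<lambda>i. i + k"]
  proof (rule definable_cong)
    fix v :: "nat \<Rightarrow> 'a"
    have "map (\<lambda>i. v (i + k)) [0..<l] = map v [k..<k + l]"
      by (rule nth_equalityI) (simp_all add: add.commute)
    moreover have "(\<lambda>i. v (i + l + k)) = (\<lambda>i. v (i + (k + l)))"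
      by (simp add: algebra_simps)
    ultimately show "map (\<lambda>i. v (i + k)) [0..<l] = M (\<lambda>i. v (i + l + k))
      \<longleftrightarrow> map v [k..<k + l] = M (\<lambda>i. v (i + (k + l)))"
      by (simp only:)
  qed
  ultimately have "definable (\<lambda>v. map v [0..<k] = L (\<lambda>i. v (i + (k + l)))
      \<and> map v [k..<k + l] = M (\<lambda>i. v (i + (k + l))))"
    by (rule definable.conj)
  then have "definable (\<lambda>v. map v [0..<k + l] = L (\<lambda>i. v (i + (k + l))) @ M (\<lambda>i. v (i + (k + l))))"
  proof (rule definable_cong)
    fix v :: "nat \<Rightarrow> 'a"
    have "map v [0..<k + l] = map v [0..<k] @ map v [k..<k + l]"
      using upt_add_eq_append[of 0 k l] by simp
    then show "map v [0..<k] = L (\<lambda>i. v (i + (k + l))) \<and> map v [k..<k + l] = M (\<lambda>i. v (i + (k + l)))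
      \<longleftrightarrow> map v [0..<k + l] = L (\<lambda>i. v (i + (k + l))) @ M (\<lambda>i. v (i + (k + l)))"
      using append_eq_append_conv[of "map v [0..<k]" "L (\<lambda>i. v (i + (k + l)))"] lenL by simp
  qed
  then show ?thesis
    unfolding definable_tuple_def using lenL lenM by (intro exI[of _ "k + l"]) simp
qed

lemma definable_tuple_map_var: "definable_tuple (\<lambda>v. map (\<lambda>i. v (f i)) xs)"
  by (induction xs) (simp_all add: definable_tuple_Nil definable_tuple_Cons definable_term_var)

lemma definable_tuple_const: "definable_tuple (\<lambda>v. cs)"
  by (induction cs) (simp_all add: definable_tuple_Nil definable_tuple_Cons definable_term_const)

lemma definable_setI: "definable (\<lambda>v. Q (map v [0..<n])) \<Longrightarrow> {xs. length xs = n \<and> Q xs} \<in> D n"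
  by (drule definable_set[of _ n undefined]) (simp add: map_prepend_upt cong: conj_cong)

lemma dset1_of_definable: "definable (\<lambda>v. Q (v 0)) \<Longrightarrow> dset1 D (Collect Q)"
proof -
  assume "definable (\<lambda>v. Q (v 0))"
  then have "{xs. length xs = 1 \<and> Q (hd xs)} \<in> D 1"
    by (intro definable_setI) (simp add: upt_rec)
  moreover have "{xs. length xs = 1 \<and> Q (hd xs)} = (\<lambda>y. [y]) ` Collect Q"
    by (auto simp: length_Suc_conv)
  ultimately show ?thesis by (simp add: dset1_def)
qed

lemmas definable_intros = definable.conj definable_disj definable_imp definable.Not
  definable_ex definable_all definable_const definable_less definable_le definable_eq definable_mem
  definable_term_var definable_term_const definable_term_plus definable_term_uminus
  definable_tuple_Nil definable_tuple_Cons definable_tuple_append definable_tuple_map_var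
  definable_tuple_const

end

section \<open>Definable choice\<close>

definition is_inf :: "('b::linorder \<Rightarrow> bool) \<Rightarrow> 'b \<Rightarrow> bool" where
  "is_inf Z c \<longleftrightarrow> (\<forall>z. Z z \<longrightarrow> c \<le> z) \<and> (\<forall>b. (\<forall>z. Z z \<longrightarrow> b \<le> z) \<longrightarrow> b \<le> c)"

definition is_sup :: "('b::linorder \<Rightarrow> bool) \<Rightarrow> 'b \<Rightarrow> bool" where
  "is_sup Z s \<longleftrightarrow> (\<forall>z. Z z \<longrightarrow> z \<le> s) \<and> (\<forall>b. (\<forall>z. Z z \<longrightarrow> z \<le> b) \<longrightarrow> s \<le> b)"

lemma is_inf_unique: "is_inf Z c \<Longrightarrow> is_inf Z c' \<Longrightarrow> c = c'"
  unfolding is_inf_def by (meson order.antisym)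

lemma is_sup_unique: "is_sup Z s \<Longrightarrow> is_sup Z s' \<Longrightarrow> s = s'"
  unfolding is_sup_def by (meson order.antisym)

text \<open>A point of \<open>Z\<close> described by a first-order formula in \<open>Z\<close>, so that the choice is
  uniform in parameters: the infimum \<open>c\<close> of \<open>Z\<close> if it is attained, and otherwise
  \<open>c + m\<close> with \<open>m = sup {x. x + x \<le> - c + d}\<close>, a substitute for the midpoint of an interval
  \<open>(c, d)\<close> contained in \<open>Z\<close>. The positive constant \<open>p\<close> bounds \<open>d\<close> when \<open>Z\<close>
  contains a whole ray; a group has no canonical positive element.\<close>

definition pick_above :: "'b::{linorder,group_add} \<Rightarrow> ('b \<Rightarrow> bool) \<Rightarrow> 'b \<Rightarrow> 'b \<Rightarrow> bool" where
  "pick_above p Z c y \<longleftrightarrow> (Z c \<and> y = c) \<or>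
     (\<not> Z c \<and> (\<exists>d. is_sup (\<lambda>z. c < z \<and> z \<le> c + p \<and> (\<forall>w. c < w \<and> w < z \<longrightarrow> Z w)) d \<and>
        (\<exists>m. is_sup (\<lambda>x. x + x \<le> - c + d) m \<and> y = c + m)))"

definition pick_bounded :: "'b::{linorder,group_add} \<Rightarrow> ('b \<Rightarrow> bool) \<Rightarrow> 'b \<Rightarrow> bool" where
  "pick_bounded p Z y \<longleftrightarrow> (\<exists>c. is_inf Z c \<and> pick_above p Z c y)"

definition pick :: "'b::{linorder,group_add} \<Rightarrow> ('b \<Rightarrow> bool) \<Rightarrow> 'b \<Rightarrow> bool" where
  "pick p Y y \<longleftrightarrow>
     ((\<exists>z. Y z \<and> 0 \<le> z) \<and> pick_bounded p (\<lambda>z. Y z \<and> 0 \<le> z) y) \<or>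
     (\<not> (\<exists>z. Y z \<and> 0 \<le> z) \<and> pick_bounded p (\<lambda>z. Y (- z)) (- y))"

lemma pick_above_unique:
  assumes "pick_above p Z c y" "pick_above p Z c y'"
  shows "y = y'"
proof (cases "Z c")
  case True
  then show ?thesis using assms unfolding pick_above_def by simp
next
  case False
  let ?W = "\<lambda>z. c < z \<and> z \<le> c + p \<and> (\<forall>w. c < w \<and> w < z \<longrightarrow> Z w)"
  obtain d m where d: "is_sup ?W d" and m: "is_sup (\<lambda>x. x + x \<le> - c + d) m" and y: "y = c + m"
    using assms(1) False unfolding pick_above_def by blast
  obtain d' m' where d': "is_sup ?W d'" and m': "is_sup (\<lambda>x. x + x \<le> - c + d') m'"
    and y': "y' = c + m'"
    using assms(2) False unfolding pick_above_def by blast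
  have "d = d'" using d d' by (rule is_sup_unique)
  then have "m = m'" using m m' is_sup_unique by simp
  then show ?thesis using y y' by simp
qed

lemma pick_bounded_unique:
  assumes "pick_bounded p Z y" "pick_bounded p Z y'"
  shows "y = y'"
proof -
  obtain c where c: "is_inf Z c" "pick_above p Z c y"
    using assms(1) unfolding pick_bounded_def by blast
  obtain c' where c': "is_inf Z c'" "pick_above p Z c' y'"
    using assms(2) unfolding pick_bounded_def by blast
  have "c = c'" using c(1) c'(1) by (rule is_inf_unique)
  then show ?thesis using c(2) c'(2) pick_above_unique by simp
qed

lemma pick_unique:
  assumes "pick p Y y" "pick p Y y'"
  shows "y = y'"
proof (cases "\<exists>z. Y z \<and> 0 \<le> z")
  case True
  then have "pick_bounded p (\<lambda>z. Y z \<and> 0 \<le> z) y" "pick_bounded p (\<lambda>z. Y z \<and> 0 \<le> z) y'"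
    using assms unfolding pick_def by simp_all
  then show ?thesis by (rule pick_bounded_unique)
next
  case False
  then have "pick_bounded p (\<lambda>z. Y (- z)) (- y)" "pick_bounded p (\<lambda>z. Y (- z)) (- y')"
    using assms unfolding pick_def by blast+
  then have "- y = - y'" by (rule pick_bounded_unique)
  then show ?thesis by simp
qed

lemma oint_accumulating_from_right:
  assumes acc: "\<forall>u>c. \<exists>z \<in> oint l r. c < z \<and> z < u" and z0: "z0 \<in> oint l r"
  shows "{w. c < w \<and> w < z0} \<subseteq> oint l r"
proof
  fix w assume w: "w \<in> {w. c < w \<and> w < z0}"
  have "a < w" if "l = Some a" for a
  proof (rule ccontr)
    assume "\<not> a < w"
    then have "c < a" using w by auto
    then obtain z where "z \<in> oint l r" "z < a" using acc by blast
    then show False using that by (simp add: oint_def) (blast dest: less_asym)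
  qed
  moreover have "w < b" if "r = Some b" for b
    using z0 w that by (auto simp: oint_def)
  ultimately show "w \<in> oint l r"
    by (auto simp: oint_def split: option.split)
qed

lemma finite_union_accumulating_from_right:
  assumes "finite P" "finite Q" "c < u0"
    and acc: "\<forall>u>c. \<exists>z \<in> P \<union> (\<Union>(l, r) \<in> Q. oint l r). c < z \<and> z < u"
  shows "\<exists>q \<in> Q. \<forall>u>c. \<exists>z. z \<in> oint (fst q) (snd q) \<and> c < z \<and> z < u"
proof (rule ccontr)
  assume "\<not> ?thesis"
  then have "\<forall>q \<in> Q. \<exists>u. c < u \<and> (\<forall>z. z \<in> oint (fst q) (snd q) \<longrightarrow> \<not> (c < z \<and> z < u))"
    by (simp add: not_less)
  then obtain ub where ub: "\<forall>q \<in> Q. c < ub q \<and> (\<forall>z. z \<in> oint (fst q) (snd q) \<longrightarrow> \<not> (c < z \<and> z < ub q))"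
    by (rule bchoice[elim_format]) blast
  define S where "S = insert u0 (ub ` Q \<union> {z \<in> P. c < z})"
  have S: "finite S" "S \<noteq> {}"
    using assms by (simp_all add: S_def)
  define U where "U = Min S"
  have "c < U"
    unfolding U_def using S ub \<open>c < u0\<close> by (subst Min_gr_iff) (auto simp: S_def)
  moreover have "U \<le> s" if "s \<in> S" for s
    unfolding U_def using S(1) that by (rule Min_le)
  then have U: "\<And>q. q \<in> Q \<Longrightarrow> U \<le> ub q" "\<And>z. z \<in> P \<Longrightarrow> c < z \<Longrightarrow> U \<le> z"
    by (simp_all add: S_def)
  ultimately obtain z where z: "z \<in> P \<union> (\<Union>(l, r) \<in> Q. oint l r)" "c < z" "z < U"
    using acc by blast
  show False
  proof (cases "z \<in> P")
    case True
    then show False using U(2) z(2,3) by (meson leD)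
  next
    case False
    then obtain q where "q \<in> Q" "z \<in> oint (fst q) (snd q)"
      using z(1) by auto
    then show False using U(1) ub z(2,3) by (meson less_le_trans)
  qed
qed

lemma is_inf_not_attained_accumulates:
  assumes c: "is_inf Z c" and "\<not> Z c"
  shows "\<forall>u>c. \<exists>z \<in> Collect Z. c < z \<and> z < u"
proof (intro allI impI)
  fix u assume "c < u"
  show "\<exists>z \<in> Collect Z. c < z \<and> z < u"
  proof (rule ccontr)
    assume none: "\<not> ?thesis"
    have "u \<le> z" if "Z z" for z
    proof -
      have "c \<le> z"
        using c that unfolding is_inf_def by blast
      moreover have "z \<noteq> c"
        using that \<open>\<not> Z c\<close> by blast
      ultimately have "c < z" by simp
      then show "u \<le> z"
        using none that by (auto simp: not_less dest: leD)
    qed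
    then have "u \<le> c"
      using c unfolding is_inf_def by blast
    then show False
      using \<open>c < u\<close> by simp
  qed
qed

locale dc_lom_expansion = ordered_group_expansion D
  for D :: "nat \<Rightarrow> ('a::{linorder,group_add}) list set set" +
  assumes dense_ordered_group: "dense_ordered_group TYPE('a)"
    and locally_o_minimal: "locally_o_minimal D"
    and definably_complete: "definably_complete D"
begin

lemma add_strict_mono_left: "x < y \<Longrightarrow> z + x < z + (y::'a)"
  using dense_ordered_group by (simp add: dense_ordered_group_def)

lemma add_strict_mono_right: "x < y \<Longrightarrow> x + z < y + (z::'a)"
  using dense_ordered_group by (simp add: dense_ordered_group_def)

lemma add_mono_left: "x \<le> y \<Longrightarrow> z + x \<le> z + (y::'a)"
  by (metis add_strict_mono_left order_le_less)

lemma add_mono_right: "x \<le> y \<Longrightarrow> x + z \<le> y + (z::'a)"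
  by (metis add_strict_mono_right order_le_less)

lemma between_exists: "x < y \<Longrightarrow> \<exists>z::'a. x < z \<and> z < y"
  using dense_ordered_group by (simp add: dense_ordered_group_def)

lemma greater_exists: "\<exists>y::'a. x < y"
  using dense_ordered_group by (simp add: dense_ordered_group_def)

lemma half_exists:
  assumes "0 < (g::'a)"
  shows "\<exists>e. 0 < e \<and> e + e \<le> g"
proof -
  obtain e0 where e0: "0 < e0" "e0 < g"
    using between_exists[OF assms] by blast
  show ?thesis
  proof (cases "e0 + e0 \<le> g")
    case True
    then show ?thesis using e0 by blast
  next
    case False
    then have lt: "g < e0 + e0" by simp
    let ?e = "g + - e0"
    have "e0 + - e0 < g + - e0" using add_strict_mono_right[OF e0(2), of "- e0"] .
    then have pos: "0 < ?e" by simp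
    have "g + - e0 < e0 + e0 + - e0" using add_strict_mono_right[OF lt, of "- e0"] .
    then have less: "?e < e0" by (simp add: add.assoc)
    have "?e + ?e < ?e + e0" using add_strict_mono_left[OF less, of ?e] .
    then have "?e + ?e < g" by (simp add: add.assoc)
    then show ?thesis using pos by (intro exI[of _ ?e]) simp
  qed
qed

lemma double_le_imp_le:
  assumes e: "e + e \<le> g" and x: "x + x \<le> (g::'a)"
  shows "x \<le> - e + g"
proof (rule ccontr)
  assume "\<not> x \<le> - e + g"
  then have less: "- e + g < x" by simp
  have "e + e + - e \<le> g + - e" using add_mono_right[OF e, of "- e"] .
  then have "e \<le> g + - e" by (simp add: add.assoc)
  then have "e + g \<le> g + - e + g" using add_mono_right by blast
  then have "- e + (e + g) \<le> - e + (g + - e + g)" using add_mono_left by blast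
  then have "g \<le> (- e + g) + (- e + g)" by (simp add: add.assoc del: add_uminus_conv_diff)
  also have "\<dots> < x + (- e + g)" using add_strict_mono_right[OF less] .
  also have "\<dots> < x + x" using add_strict_mono_left[OF less] .
  finally show False using x by simp
qed

lemma neg_add_less:
  assumes "0 < (e::'a)"
  shows "- e + g < g"
proof -
  have "- e + 0 < - e + e" using add_strict_mono_left[OF assms, of "- e"] .
  then have "- e < 0" by simp
  then have "- e + g < 0 + g" by (rule add_strict_mono_right)
  then show ?thesis by simp
qed

lemma is_inf_exists:
  assumes "dset1 D (Collect Z)" "Z z" "\<forall>z. Z z \<longrightarrow> b \<le> z"
  shows "\<exists>c. is_inf Z c"
  using definably_complete assms unfolding definably_complete_def is_inf_def
  by (metis empty_iff mem_Collect_eq)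

lemma is_sup_exists:
  assumes "dset1 D (Collect Z)" "Z z" "\<forall>z. Z z \<longrightarrow> z \<le> b"
  shows "\<exists>s. is_sup Z s"
  using definably_complete assms unfolding definably_complete_def is_sup_def
  by (metis empty_iff mem_Collect_eq)

lemma half_sup_exists:
  assumes "0 < (g::'a)"
  shows "\<exists>m. is_sup (\<lambda>x. x + x \<le> g) m \<and> 0 < m \<and> m < g"
proof -
  obtain e where e: "0 < e" "e + e \<le> g"
    using half_exists[OF assms] by blast
  have "dset1 D {x. x + x \<le> g}"
    by (intro dset1_of_definable definable_intros)
  moreover have "0 + 0 \<le> g"
    using assms by simp
  ultimately obtain m where m: "is_sup (\<lambda>x. x + x \<le> g) m"
    using is_sup_exists[of "\<lambda>x. x + x \<le> g" 0 "- e + g"] double_le_imp_le[OF e(2)] by blast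
  then have "e \<le> m" "m \<le> - e + g"
    using e(2) double_le_imp_le[OF e(2)] unfolding is_sup_def by auto
  then show ?thesis
    using m e(1) neg_add_less[OF e(1), of g] by (intro exI[of _ m]) auto
qed

lemma right_interval_of_accumulation:
  assumes Z: "dset1 D Z" and acc: "\<forall>u>c. \<exists>z \<in> Z. c < z \<and> z < u"
  shows "\<exists>u>c. {w. c < w \<and> w < u} \<subseteq> Z"
proof -
  obtain l r P Q where c: "c \<in> oint l r" and fin: "finite P" "finite Q"
    and eq: "Z \<inter> oint l r = P \<union> (\<Union>(l', r') \<in> Q. oint l' r')"
    using locally_o_minimal[unfolded locally_o_minimal_def, rule_format, OF Z, of c]
    by (elim exE conjE)
  obtain u0 where u0: "c < u0" "{w. c < w \<and> w < u0} \<subseteq> oint l r"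
  proof (cases r)
    case None
    obtain u0 where "c < u0" using greater_exists by blast
    moreover have "{w. c < w \<and> w < u0} \<subseteq> oint l r"
      using c None by (cases l) (auto simp: oint_def intro: less_trans)
    ultimately show ?thesis by (rule that)
  next
    case (Some b)
    have "{w. c < w \<and> w < b} \<subseteq> oint l r"
      using c Some by (cases l) (auto simp: oint_def intro: less_trans)
    moreover have "c < b" using c Some by (simp add: oint_def split: option.splits)
    ultimately show ?thesis using that by blast
  qed
  have "\<forall>u>c. \<exists>z \<in> P \<union> (\<Union>(l', r') \<in> Q. oint l' r'). c < z \<and> z < u"
  proof (intro allI impI)
    fix u assume "c < u"
    then obtain z where "z \<in> Z" "c < z" "z < min u u0"
      using acc u0(1) by (metis min_less_iff_conj)
    then show "\<exists>z \<in> P \<union> (\<Union>(l', r') \<in> Q. oint l' r'). c < z \<and> z < u"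
      using u0(2) eq by (intro bexI[of _ z]) auto
  qed
  then obtain l' r' where q: "(l', r') \<in> Q" and acc': "\<forall>u>c. \<exists>z \<in> oint l' r'. c < z \<and> z < u"
    using finite_union_accumulating_from_right[OF fin u0(1)] by fastforce
  obtain z0 where z0: "z0 \<in> oint l' r'" "c < z0" "z0 < u0"
    using acc' u0(1) by blast
  have "{w. c < w \<and> w < z0} \<subseteq> Z \<inter> oint l r"
    unfolding eq using oint_accumulating_from_right[OF acc' z0(1)] q by blast
  then show ?thesis
    using z0(2) by blast
qed

lemma definable_mem_dset1:
  assumes Y: "dset1 D Y" and t: "definable_term t"
  shows "definable (\<lambda>v. t v \<in> Y)"
proof -
  have "definable (\<lambda>v. [t v] \<in> (\<lambda>y. [y]) ` Y)"
    using Y unfolding dset1_def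
    by (intro definable_mem definable_tuple_Cons[OF t definable_tuple_Nil])
  then show ?thesis by (rule definable_cong) blast
qed

lemma initial_interval_sup_exists:
  assumes Z: "dset1 D (Collect Z)" and u: "c < u" "{w. c < w \<and> w < u} \<subseteq> Collect Z"
    and p: "0 < p"
  shows "\<exists>d. is_sup (\<lambda>z. c < z \<and> z \<le> c + p \<and> (\<forall>w. c < w \<and> w < z \<longrightarrow> Z w)) d
    \<and> c < d \<and> (\<forall>w. c < w \<and> w < d \<longrightarrow> Z w)"
proof -
  let ?W = "\<lambda>z. c < z \<and> z \<le> c + p \<and> (\<forall>w. c < w \<and> w < z \<longrightarrow> Z w)"
  have "dset1 D (Collect ?W)"
    by (intro dset1_of_definable definable_intros definable_mem_dset1[OF Z, simplified])
  moreover have "c < c + p"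
    using add_strict_mono_left[OF p, of c] by simp
  then have W: "?W (min u (c + p))"
    using u by auto
  moreover have "\<forall>z. ?W z \<longrightarrow> z \<le> c + p"
    by blast
  ultimately obtain d where d: "is_sup ?W d"
    using is_sup_exists by blast
  have "c < d"
    using d W unfolding is_sup_def by (meson less_le_trans)
  moreover have "Z w" if "c < w" "w < d" for w
  proof -
    have "\<exists>z. ?W z \<and> w < z"
    proof (rule ccontr)
      assume "\<not> ?thesis"
      then have "d \<le> w"
        using d unfolding is_sup_def by (meson not_le)
      then show False using that by simp
    qed
    then show ?thesis using that by blast
  qed
  ultimately show ?thesis
    using d by blast
qed

lemma pick_bounded_exists:
  assumes Z: "dset1 D (Collect Z)" and z: "Z z" and lb: "\<forall>z. Z z \<longrightarrow> b \<le> z" and p: "0 < p"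
  shows "\<exists>y. pick_bounded p Z y \<and> Z y"
proof -
  obtain c where c: "is_inf Z c"
    using is_inf_exists[OF Z z lb] by blast
  show ?thesis
  proof (cases "Z c")
    case True
    then show ?thesis using c unfolding pick_bounded_def pick_above_def by blast
  next
    case False
    with c have "\<forall>u>c. \<exists>z \<in> Collect Z. c < z \<and> z < u"
      by (rule is_inf_not_attained_accumulates)
    then obtain u where "c < u" "{w. c < w \<and> w < u} \<subseteq> Collect Z"
      using right_interval_of_accumulation[OF Z] by blast
    then obtain d where d: "is_sup (\<lambda>z. c < z \<and> z \<le> c + p \<and> (\<forall>w. c < w \<and> w < z \<longrightarrow> Z w)) d"
      and "c < d" and d_in: "\<forall>w. c < w \<and> w < d \<longrightarrow> Z w"
      using initial_interval_sup_exists[OF Z _ _ p] by blast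
    have "- c + c < - c + d"
      using add_strict_mono_left[OF \<open>c < d\<close>] .
    then obtain m where m: "is_sup (\<lambda>x. x + x \<le> - c + d) m" "0 < m" "m < - c + d"
      using half_sup_exists by auto
    have "c + 0 < c + m"
      using add_strict_mono_left[OF m(2)] .
    moreover have "c + m < c + (- c + d)"
      using add_strict_mono_left[OF m(3)] .
    ultimately have "Z (c + m)"
      using d_in by (simp add: add.assoc[symmetric])
    moreover have "pick_bounded p Z (c + m)"
      unfolding pick_bounded_def pick_above_def using c False d m(1) by blast
    ultimately show ?thesis by blast
  qed
qed

lemma pick_exists:
  assumes Y: "dset1 D (Collect Y)" and y: "Y y" and p: "0 < p"
  shows "\<exists>y. pick p Y y \<and> Y y"
proof (cases "\<exists>z. Y z \<and> 0 \<le> z")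
  case True
  then obtain z where z: "Y z \<and> 0 \<le> z" by blast
  have "dset1 D (Collect (\<lambda>z. Y z \<and> 0 \<le> z))"
    by (intro dset1_of_definable definable_intros definable_mem_dset1[OF Y, simplified])
  from pick_bounded_exists[OF this z _ p, of 0] obtain y where
    "pick_bounded p (\<lambda>z. Y z \<and> 0 \<le> z) y" "Y y"
    by auto
  then show ?thesis
    using True unfolding pick_def by blast
next
  case False
  have "dset1 D (Collect (\<lambda>z. Y (- z)))"
    by (intro dset1_of_definable definable_intros definable_mem_dset1[OF Y, simplified])
  moreover have "Y (- (- y))"
    using y by simp
  moreover have "\<forall>z. Y (- z) \<longrightarrow> 0 \<le> z"
  proof (intro allI impI)
    fix z assume "Y (- z)"
    then have "- z < 0" using False by (meson not_le)
    then have "z + - z < z + 0" by (rule add_strict_mono_left)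
    then show "0 \<le> z" by simp
  qed
  ultimately obtain y' where "pick_bounded p (\<lambda>z. Y (- z)) y'" "Y (- y')"
    using pick_bounded_exists p by blast
  then show ?thesis
    using False unfolding pick_def by (intro exI[of _ "- y'"]) simp
qed

lemma pick_nonempty: "pick (p::'a) Y y \<Longrightarrow> \<exists>z. Y z"
proof -
  have "\<exists>z. Z z" if Z: "pick_bounded p Z y'" for Z y'
  proof (rule ccontr)
    assume "\<not> (\<exists>z. Z z)"
    moreover obtain c where "is_inf Z c"
      using Z unfolding pick_bounded_def by blast
    ultimately have "b \<le> c" for b
      unfolding is_inf_def by blast
    then show False
      using greater_exists[of c] by (meson not_le)
  qed
  then show "pick p Y y \<Longrightarrow> \<exists>z. Y z"
    unfolding pick_def by blast
qed

lemma definable_choice_last: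
  assumes F: "F \<in> D (Suc k)"
  shows "\<exists>h. (\<forall>q. length q = k \<longrightarrow> (\<exists>y. q @ [y] \<in> F) \<longrightarrow> q @ [h q] \<in> F) \<and>
    {q @ [h q] | q. length q = k \<and> (\<exists>y. q @ [y] \<in> F)} \<in> D (Suc k)"
proof -
  obtain p :: 'a where p: "0 < p"
    using greater_exists by blast
  define h where "h q = (THE y. pick p (\<lambda>z. q @ [z] \<in> F) y)" for q
  have h: "pick p (\<lambda>z. q @ [z] \<in> F) (h q) \<and> q @ [h q] \<in> F" if ne: "\<exists>y. q @ [y] \<in> F" for q
  proof -
    have "dset1 D (Collect (\<lambda>z. q @ [z] \<in> F))"
      by (intro dset1_of_definable definable_intros) (rule F)
    then obtain y where y: "pick p (\<lambda>z. q @ [z] \<in> F) y" "q @ [y] \<in> F"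
      using pick_exists p ne by blast
    have "h q = y"
      unfolding h_def
      by (rule the_equality[where P = "pick p (\<lambda>z. q @ [z] \<in> F)", OF y(1)])
        (rule pick_unique[OF _ y(1)])
    then show ?thesis using y by simp
  qed
  have "definable (\<lambda>v. pick p (\<lambda>z. map v [0..<k] @ [z] \<in> F) (v k))"
    unfolding pick_def pick_bounded_def pick_above_def is_inf_def is_sup_def
    by (intro definable_intros) (rule F)+
  then have "definable (\<lambda>v. pick p (\<lambda>z. butlast (map v [0..<Suc k]) @ [z] \<in> F) (last (map v [0..<Suc k])))"
    by (rule definable_cong) simp
  from definable_setI[where Q = "\<lambda>xs. pick p (\<lambda>z. butlast xs @ [z] \<in> F) (last xs)", OF this]
  have "{xs. length xs = Suc k \<and> pick p (\<lambda>z. butlast xs @ [z] \<in> F) (last xs)} \<in> D (Suc k)" .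
  moreover have "{xs. length xs = Suc k \<and> pick p (\<lambda>z. butlast xs @ [z] \<in> F) (last xs)}
      = {q @ [h q] | q. length q = k \<and> (\<exists>y. q @ [y] \<in> F)}"
  proof (intro set_eqI iffI)
    fix xs assume xs: "xs \<in> {xs. length xs = Suc k \<and> pick p (\<lambda>z. butlast xs @ [z] \<in> F) (last xs)}"
    then obtain q y where q: "xs = q @ [y]" "length q = k"
      by (auto simp: length_Suc_conv_rev)
    then have pick: "pick p (\<lambda>z. q @ [z] \<in> F) y"
      using xs by simp
    then have ne: "\<exists>y. q @ [y] \<in> F"
      by (rule pick_nonempty)
    have "h q = y"
      using pick_unique[OF conjunct1[OF h[OF ne]] pick] .
    then show "xs \<in> {q @ [h q] | q. length q = k \<and> (\<exists>y. q @ [y] \<in> F)}"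
      using q ne by blast
  next
    fix xs assume "xs \<in> {q @ [h q] | q. length q = k \<and> (\<exists>y. q @ [y] \<in> F)}"
    then obtain q where "xs = q @ [h q]" "length q = k" "\<exists>y. q @ [y] \<in> F"
      by blast
    then show "xs \<in> {xs. length xs = Suc k \<and> pick p (\<lambda>z. butlast xs @ [z] \<in> F) (last xs)}"
      using h by simp
  qed
  ultimately show ?thesis
    using h by (intro exI[of _ h]) simp
qed

lemma definable_choice:
  assumes "F \<in> D (k + m)"
  shows "\<exists>g. (\<forall>q. length q = k \<longrightarrow> (\<exists>zs. q @ zs \<in> F) \<longrightarrow> q @ g q \<in> F) \<and>
    {q @ g q | q. length q = k \<and> (\<exists>zs. q @ zs \<in> F)} \<in> D (k + m)"
  using assms
proof (induction m arbitrary: F)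
  case 0
  then have F: "F \<in> D k" by simp
  have "{q @ [] | q. length q = k \<and> (\<exists>zs. q @ zs \<in> F)} = F"
  proof (intro set_eqI iffI)
    fix x assume "x \<in> {q @ [] | q. length q = k \<and> (\<exists>zs. q @ zs \<in> F)}"
    then obtain zs where "length x = k" "x @ zs \<in> F"
      by auto
    moreover from this have "length (x @ zs) = k"
      using in_D_length[OF F] by blast
    ultimately show "x \<in> F" by simp
  next
    fix x assume "x \<in> F"
    moreover from this have "length x = k"
      by (rule in_D_length[OF F])
    ultimately show "x \<in> {q @ [] | q. length q = k \<and> (\<exists>zs. q @ zs \<in> F)}"
      by (intro CollectI exI[of _ x]) (auto intro!: exI[of _ "[]"])
  qed
  moreover have "q @ [] \<in> F" if "length q = k" "q @ zs \<in> F" for q zs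
    using that in_D_length[OF F that(2)] by simp
  ultimately show ?case
    using F by (intro exI[of _ "\<lambda>q. []"]) auto
next
  case (Suc m)
  then have F: "F \<in> D (Suc (k + m))" by simp
  let ?F' = "butlast ` F"
  obtain g where g: "\<forall>q. length q = k \<longrightarrow> (\<exists>zs. q @ zs \<in> ?F') \<longrightarrow> q @ g q \<in> ?F'"
    and G: "{q @ g q | q. length q = k \<and> (\<exists>zs. q @ zs \<in> ?F')} \<in> D (k + m)"
    using Suc.IH[OF butlast_image_in_D[OF F]] by blast
  obtain h where h: "\<forall>r. length r = k + m \<longrightarrow> (\<exists>y. r @ [y] \<in> F) \<longrightarrow> r @ [h r] \<in> F"
    and H: "{r @ [h r] | r. length r = k + m \<and> (\<exists>y. r @ [y] \<in> F)} \<in> D (Suc (k + m))"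
    using definable_choice_last[OF F] by blast
  have long: "\<forall>a\<in>F. k < length a"
    using in_D_length[OF F] by simp
  have fibre: "(\<exists>zs. q @ zs \<in> ?F') \<longleftrightarrow> (\<exists>zs. q @ zs \<in> F)" if "length q = k" for q
    using prefix_in_butlast_image_iff[of F q] long that by simp
  have "[] \<notin> F"
    using long by auto
  then have snoc: "r \<in> ?F' \<longleftrightarrow> (\<exists>y. r @ [y] \<in> F)" for r
    by (rule butlast_image_iff_snoc)
  have graph: "q @ g q \<in> ?F' \<and> length (q @ g q) = k + m"
    if "length q = k" "\<exists>zs. q @ zs \<in> F" for q
  proof -
    have "q @ g q \<in> ?F'"
      using g fibre[OF that(1)] that by blast
    then show ?thesis
      using in_D_length[OF butlast_image_in_D[OF F]] by blast
  qed
  define g' where "g' q = g q @ [h (q @ g q)]" for q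
  have "q @ g' q \<in> F" if "length q = k" "\<exists>zs. q @ zs \<in> F" for q
  proof -
    have "(q @ g q) @ [h (q @ g q)] \<in> F"
      using h[rule_format, of "q @ g q"] graph[OF that] snoc by blast
    then show ?thesis by (simp add: g'_def)
  qed
  moreover have "{q @ g' q | q. length q = k \<and> (\<exists>zs. q @ zs \<in> F)}
      = {r @ [h r] | r. length r = k + m \<and> (\<exists>y. r @ [y] \<in> F)}
        \<inter> {r @ [y] | r y. r \<in> {q @ g q | q. length q = k \<and> (\<exists>zs. q @ zs \<in> ?F')}}"
  proof (intro set_eqI iffI)
    fix x assume "x \<in> {q @ g' q | q. length q = k \<and> (\<exists>zs. q @ zs \<in> F)}"
    then obtain q where x: "x = (q @ g q) @ [h (q @ g q)]" "length q = k" "\<exists>zs. q @ zs \<in> F"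
      unfolding g'_def by auto
    have "q @ g q \<in> {q @ g q | q. length q = k \<and> (\<exists>zs. q @ zs \<in> ?F')}"
      using x(2,3) fibre[OF x(2)] by blast
    then show "x \<in> {r @ [h r] | r. length r = k + m \<and> (\<exists>y. r @ [y] \<in> F)}
        \<inter> {r @ [y] | r y. r \<in> {q @ g q | q. length q = k \<and> (\<exists>zs. q @ zs \<in> ?F')}}"
      using x graph[OF x(2,3)] snoc by blast
  next
    fix x assume x: "x \<in> {r @ [h r] | r. length r = k + m \<and> (\<exists>y. r @ [y] \<in> F)}
        \<inter> {r @ [y] | r y. r \<in> {q @ g q | q. length q = k \<and> (\<exists>zs. q @ zs \<in> ?F')}}"
    then obtain r where r: "x = r @ [h r]"
      by blast
    from x obtain q y where q: "x = (q @ g q) @ [y]" "length q = k" "\<exists>zs. q @ zs \<in> ?F'"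
      by blast
    have "r = q @ g q"
      using r q(1) by simp
    then show "x \<in> {q @ g' q | q. length q = k \<and> (\<exists>zs. q @ zs \<in> F)}"
      using r q(2,3) fibre[OF q(2)] unfolding g'_def by auto
  qed
  moreover have "{r @ [h r] | r. length r = k + m \<and> (\<exists>y. r @ [y] \<in> F)}
      \<inter> {r @ [y] | r y. r \<in> {q @ g q | q. length q = k \<and> (\<exists>zs. q @ zs \<in> ?F')}} \<in> D (k + Suc m)"
    using Int_in_D[OF H snoc_in_D[OF G]] by simp
  ultimately show ?case
    by (intro exI[of _ g']) simp
qed

end

section \<open>Curve selection in a definable metric space\<close>

locale definable_metric = dc_lom_expansion D
  for D :: "nat \<Rightarrow> ('a::{linorder,group_add}) list set set" +
  fixes n :: nat and X :: "'a list set" and dX :: "'a list \<Rightarrow> 'a list \<Rightarrow> 'a"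
  assumes metric: "definable_metric_space D n X dX"
begin

definition dist_graph :: "'a list set" where
  "dist_graph = {xs @ ys @ [dX xs ys] | xs ys. xs \<in> X \<and> ys \<in> X}"

lemma X_in_D: "X \<in> D n"
  using metric by (simp add: definable_metric_space_def)

lemma dist_graph_in_D: "dist_graph \<in> D (n + n + 1)"
  using metric by (simp add: definable_metric_space_def dist_graph_def)

lemma dist_eq_0_iff: "x \<in> X \<Longrightarrow> y \<in> X \<Longrightarrow> dX x y = 0 \<longleftrightarrow> x = y"
  using metric by (simp add: definable_metric_space_def)

lemma dist_nonneg: "x \<in> X \<Longrightarrow> y \<in> X \<Longrightarrow> 0 \<le> dX x y"
  using metric by (simp add: definable_metric_space_def)

lemma dist_graph_mem_iff:
  assumes x: "x \<in> X" and y: "length y = n"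
  shows "x @ y @ [t] \<in> dist_graph \<longleftrightarrow> y \<in> X \<and> t = dX x y"
proof
  assume "x @ y @ [t] \<in> dist_graph"
  then obtain x' y' where eq: "x @ y @ [t] = x' @ y' @ [dX x' y']" and "x' \<in> X" "y' \<in> X"
    unfolding dist_graph_def by blast
  moreover have "length x = length x'"
    using in_D_length[OF X_in_D x] in_D_length[OF X_in_D \<open>x' \<in> X\<close>] by simp
  ultimately have "x = x'" "y = y'" "t = dX x' y'"
    using y in_D_length[OF X_in_D \<open>y' \<in> X\<close>] by auto
  then show "y \<in> X \<and> t = dX x y"
    using \<open>y' \<in> X\<close> by simp
next
  assume "y \<in> X \<and> t = dX x y"
  then show "x @ y @ [t] \<in> dist_graph"
    unfolding dist_graph_def using x by blast
qed

lemma distance_graph_in_D: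
  assumes C: "C \<in> D n" "C \<subseteq> X" and x: "x \<in> X" and P: "definable (\<lambda>v. P (v 0))"
  shows "{dX x y # y | y. y \<in> C \<and> P (dX x y)} \<in> D (Suc n)"
proof -
  let ?Q = "\<lambda>zs. tl zs \<in> C \<and> x @ tl zs @ [hd zs] \<in> dist_graph \<and> P (hd zs)"
  have "definable (\<lambda>v. map (\<lambda>i. v (Suc i)) [0..<n] \<in> C
      \<and> x @ map (\<lambda>i. v (Suc i)) [0..<n] @ [v 0] \<in> dist_graph \<and> P (v 0))"
    by (intro definable_intros P) (rule C(1) dist_graph_in_D)+
  then have "definable (\<lambda>v. ?Q (map v [0..<Suc n]))"
    by (rule definable_cong) (simp add: map_upt_Suc del: upt_Suc)
  then have "{zs. length zs = Suc n \<and> ?Q zs} \<in> D (Suc n)"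
    by (rule definable_setI)
  moreover have "{zs. length zs = Suc n \<and> ?Q zs} = {dX x y # y | y. y \<in> C \<and> P (dX x y)}"
  proof (intro set_eqI iffI)
    fix zs assume zs: "zs \<in> {zs. length zs = Suc n \<and> ?Q zs}"
    then obtain t y where "zs = t # y" "length y = n"
      by (auto simp: length_Suc_conv)
    then show "zs \<in> {dX x y # y | y. y \<in> C \<and> P (dX x y)}"
      using zs dist_graph_mem_iff[OF x] by auto
  next
    fix zs assume "zs \<in> {dX x y # y | y. y \<in> C \<and> P (dX x y)}"
    then obtain y where "zs = dX x y # y" "y \<in> C" "P (dX x y)"
      by blast
    moreover have "length y = n"
      using in_D_length[OF C(1) \<open>y \<in> C\<close>] .
    ultimately show "zs \<in> {zs. length zs = Suc n \<and> ?Q zs}"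
      using dist_graph_mem_iff[OF x] C(2) by auto
  qed
  ultimately show ?thesis by simp
qed

lemma small_distances_attained:
  assumes C: "C \<in> D n" "C \<subseteq> X" and x: "x \<in> mfrontier X dX C"
  shows "\<exists>\<epsilon>>0. \<forall>t. 0 < t \<and> t < \<epsilon> \<longrightarrow> (\<exists>y\<in>C. dX x y = t)"
proof -
  have xX: "x \<in> X" and "x \<notin> C" and close: "\<forall>e>0. \<exists>y\<in>C. dX x y < e"
    using x unfolding mfrontier_def mclosure_def mball_def by auto
  let ?S = "(\<lambda>y. dX x y) ` C"
  have "{dX x y # y | y. y \<in> C} \<in> D (Suc n)"
    using distance_graph_in_D[OF C xX, of "\<lambda>_. True"] definable_True by simp
  then have "take 1 ` {dX x y # y | y. y \<in> C} \<in> D 1"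
    using take_image_in_D[of _ 1 n] by simp
  moreover have "take 1 ` {dX x y # y | y. y \<in> C} = (\<lambda>r. [r]) ` ?S"
    by (simp add: Setcompr_eq_image image_image)
  ultimately have "dset1 D ?S"
    by (simp add: dset1_def)
  moreover have "\<forall>u>0. \<exists>r\<in>?S. 0 < r \<and> r < u"
  proof (intro allI impI)
    fix u :: 'a assume "0 < u"
    then obtain y where y: "y \<in> C" "dX x y < u"
      using close by blast
    moreover have "0 \<le> dX x y" "dX x y \<noteq> 0"
      using dist_nonneg dist_eq_0_iff xX y(1) C(2) \<open>x \<notin> C\<close> by auto
    ultimately show "\<exists>r\<in>?S. 0 < r \<and> r < u"
      by force
  qed
  ultimately obtain \<epsilon> where "0 < \<epsilon>" "{w. 0 < w \<and> w < \<epsilon>} \<subseteq> ?S"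
    using right_interval_of_accumulation by blast
  then show ?thesis by blast
qed

lemma definable_curve_by_distance:
  assumes C: "C \<in> D n" "C \<subseteq> X" and x: "x \<in> X" and "0 < \<epsilon>"
    and dist: "\<forall>t. 0 < t \<and> t < \<epsilon> \<longrightarrow> (\<exists>y\<in>C. dX x y = t)"
  shows "\<exists>\<gamma>. definable_curve D n C 0 (Some \<epsilon>) \<gamma> \<and> (\<forall>t. 0 < t \<and> t < \<epsilon> \<longrightarrow> dX x (\<gamma> t) = t)"
proof -
  define F where "F = {dX x y # y | y. y \<in> C \<and> 0 < dX x y \<and> dX x y < \<epsilon>}"
  have "definable (\<lambda>v. 0 < v 0 \<and> v 0 < \<epsilon>)"
    by (intro definable_intros)
  then have "F \<in> D (1 + n)"
    unfolding F_def using distance_graph_in_D[OF C x] by simp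
  then obtain g where g: "\<forall>q. length q = 1 \<longrightarrow> (\<exists>zs. q @ zs \<in> F) \<longrightarrow> q @ g q \<in> F"
    and G: "{q @ g q | q. length q = 1 \<and> (\<exists>zs. q @ zs \<in> F)} \<in> D (1 + n)"
    using definable_choice by blast
  have F_iff: "t # y \<in> F \<longleftrightarrow> y \<in> C \<and> dX x y = t \<and> 0 < t \<and> t < \<epsilon>" for t y
    unfolding F_def by auto
  then have nonempty_iff: "(\<exists>zs. [t] @ zs \<in> F) \<longleftrightarrow> 0 < t \<and> t < \<epsilon>" for t
    using dist by auto
  have \<gamma>: "g [t] \<in> C \<and> dX x (g [t]) = t" if "0 < t" "t < \<epsilon>" for t
  proof -
    have "[t] @ g [t] \<in> F"
      using g[rule_format, of "[t]"] nonempty_iff[of t] that by simp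
    then show ?thesis using F_iff by simp
  qed
  have "{t # g [t] | t. t \<in> oint (Some 0) (Some \<epsilon>)}
      = {q @ g q | q. length q = 1 \<and> (\<exists>zs. q @ zs \<in> F)}"
  proof (intro set_eqI iffI)
    fix w assume "w \<in> {t # g [t] | t. t \<in> oint (Some 0) (Some \<epsilon>)}"
    then obtain t where "w = [t] @ g [t]" "0 < t" "t < \<epsilon>"
      by (auto simp: oint_def)
    then show "w \<in> {q @ g q | q. length q = 1 \<and> (\<exists>zs. q @ zs \<in> F)}"
      using nonempty_iff[of t] by (intro CollectI exI[of _ "[t]"]) simp
  next
    fix w assume "w \<in> {q @ g q | q. length q = 1 \<and> (\<exists>zs. q @ zs \<in> F)}"
    then obtain q where q: "w = q @ g q" "length q = 1" "\<exists>zs. q @ zs \<in> F"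
      by blast
    then obtain t where "q = [t]"
      by (auto simp: length_Suc_conv)
    then show "w \<in> {t # g [t] | t. t \<in> oint (Some 0) (Some \<epsilon>)}"
      using q nonempty_iff[of t] by (intro CollectI exI[of _ t]) (simp add: oint_def)
  qed
  moreover obtain t where "0 < t" "t < \<epsilon>"
    using between_exists[OF \<open>0 < \<epsilon>\<close>] by blast
  then have "oint (Some 0) (Some \<epsilon>) \<noteq> {}"
    by (auto simp: oint_def)
  ultimately have "definable_curve D n C 0 (Some \<epsilon>) (\<lambda>t. g [t])"
    unfolding definable_curve_def using G \<gamma> by (simp add: oint_def)
  then show ?thesis
    using \<gamma> by blast
qed

lemma conv_left_by_distance:
  assumes x: "x \<in> X" and \<gamma>: "\<forall>t. 0 < t \<and> t < \<epsilon> \<longrightarrow> \<gamma> t \<in> X \<and> dX x (\<gamma> t) = t"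
  shows "x \<in> conv_left D n X dX 0 (Some \<epsilon>) \<gamma>"
  unfolding conv_left_def
proof (intro CollectI conjI ballI allI impI x)
  fix t A assume t: "t \<in> oint (Some 0) (Some \<epsilon>)" and A: "def_nbhd D n X dX A x"
  obtain e where e: "0 < e" "mball X dX x e \<subseteq> A"
    using A unfolding def_nbhd_def by blast
  obtain s where s: "0 < s" "s < min e t"
    using between_exists[of 0 "min e t"] e(1) t by (auto simp: oint_def)
  then have "s < \<epsilon>" "s < e" "s < t"
    using t by (auto simp: oint_def)
  then have "\<gamma> s \<in> A"
    using \<gamma> s(1) e(2) unfolding mball_def by auto
  moreover have "s \<in> oint (Some 0) (Some t)"
    using s(1) \<open>s < t\<close> by (simp add: oint_def)
  ultimately show "\<gamma> ` oint (Some 0) (Some t) \<inter> A \<noteq> {}"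
    by blast
qed

lemma curve_selection: "definable_curve_selection D n X dX"
  unfolding definable_curve_selection_def
proof (intro allI impI)
  fix C x assume C: "C \<in> D n" "C \<subseteq> X" and x: "x \<in> mfrontier X dX C"
  then have xX: "x \<in> X"
    by (simp add: mfrontier_def mclosure_def)
  obtain \<epsilon> where "0 < \<epsilon>" and dist: "\<forall>t. 0 < t \<and> t < \<epsilon> \<longrightarrow> (\<exists>y\<in>C. dX x y = t)"
    using small_distances_attained[OF C x] by blast
  then obtain \<gamma> where curve: "definable_curve D n C 0 (Some \<epsilon>) \<gamma>"
    and \<gamma>: "\<forall>t. 0 < t \<and> t < \<epsilon> \<longrightarrow> dX x (\<gamma> t) = t"
    using definable_curve_by_distance[OF C xX] by blast
  have "\<forall>t. 0 < t \<and> t < \<epsilon> \<longrightarrow> \<gamma> t \<in> X \<and> dX x (\<gamma> t) = t"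
    using curve \<gamma> C(2) unfolding definable_curve_def by (auto simp: oint_def)
  then show "\<exists>a b \<gamma>. definable_curve D n C a b \<gamma> \<and> x \<in> conv_left D n X dX a b \<gamma>"
    using curve conv_left_by_distance[OF xX] by blast
qed

end

theorem proposition4p19:
  fixes D :: "nat \<Rightarrow> ('a::{linorder,group_add}) list set set"
    and n :: nat and X :: "'a list set" and dX :: "'a list \<Rightarrow> 'a list \<Rightarrow> 'a"
  assumes "dense_ordered_group TYPE('a)"
    and "expands_ordered_group D"
    and "locally_o_minimal D"
    and "definably_complete D"
    and "definable_metric_space D n X dX"
  shows "definable_curve_selection D n X dX"
proof -
  interpret definable_metric D n X dX
    using assms by unfold_locales
  show ?thesis
    by (rule curve_selection)
qed

end
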